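(* Let $r,K,\alpha,\phi,c,m_1,m_2,\lambda,a,d,\delta,\gamma,\sigma,\eta$ be positive constants with $\phi<1$ and $m_1>m_2$, and consider the system \[ \begin{cases} \dot X = rX\left(1-\frac{X}{K}\right)-\frac{\alpha XS}{c+X}-\frac{\phi\alpha XI}{c+X},\\[1mm] \dot S = \frac{m_1\alpha XS}{c+X}-\frac{\lambda AS}{a+A}-dS,\\[1mm] \dot I = \frac{m_2\phi\alpha XI}{c+X}+\frac{\lambda AS}{a+A}-(d+\delta)I,\\[1mm] \dot A = \gamma+\sigma(S+I)-\eta A. \end{cases} \] The pest-free equilibrium $E_1=(K,0,0,\gamma/\eta)$ is (locally) stable if \[ \frac{m_1\alpha K}{c+K}<\frac{\lambda\gamma}{a\eta+\gamma}+d\quad\text{and}\quad \frac{m_2\phi\alpha K}{c+K}<d+\delta, \] and unstable if \[ \frac{m_1\alpha K}{c+K}>\frac{\lambda\gamma}{a\eta+\gamma}+d\quad\text{or}\quad \frac{m_2\phi\alpha K}{c+K}>d+\delta. \] *)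

theory Defs
  imports "HOL-Analysis.Analysis"
begin

definition is_solution_on :: "('a::real_normed_vector \<Rightarrow> 'a) \<Rightarrow> (real \<Rightarrow> 'a) \<Rightarrow> real \<Rightarrow> bool" where
  "is_solution_on F x T \<longleftrightarrow>
     (\<forall>t\<in>{0..T}. (x has_vector_derivative F (x t)) (at t within {0..T}))"

definition lyapunov_stable :: "('a::real_normed_vector \<Rightarrow> 'a) \<Rightarrow> 'a \<Rightarrow> bool" where
  "lyapunov_stable F e \<longleftrightarrow>
     (\<forall>\<epsilon>>0. \<exists>\<delta>>0. \<forall>x T. T \<ge> 0 \<and> is_solution_on F x T \<and> dist (x 0) e < \<delta>
        \<longrightarrow> (\<forall>t\<in>{0..T}. dist (x t) e < \<epsilon>))"

definition locally_attracting :: "('a::real_normed_vector \<Rightarrow> 'a) \<Rightarrow> 'a \<Rightarrow> bool" where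
  "locally_attracting F e \<longleftrightarrow>
     (\<exists>\<delta>>0. \<forall>x. (\<forall>T\<ge>0. is_solution_on F x T) \<and> dist (x 0) e < \<delta>
        \<longrightarrow> (x \<longlongrightarrow> e) at_top)"

definition locally_asymptotically_stable :: "('a::real_normed_vector \<Rightarrow> 'a) \<Rightarrow> 'a \<Rightarrow> bool" where
  "locally_asymptotically_stable F e \<longleftrightarrow> lyapunov_stable F e \<and> locally_attracting F e"

definition unstable_equilibrium :: "('a::real_normed_vector \<Rightarrow> 'a) \<Rightarrow> 'a \<Rightarrow> bool" where
  "unstable_equilibrium F e \<longleftrightarrow> \<not> lyapunov_stable F e"

definition pest_field ::
  "real \<Rightarrow> real \<Rightarrow> real \<Rightarrow> real \<Rightarrow> real \<Rightarrow> real \<Rightarrow> real \<Rightarrow> real \<Rightarrow> real \<Rightarrow> real \<Rightarrow> real \<Rightarrow> real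
   \<Rightarrow> real \<Rightarrow> real \<Rightarrow> real^4 \<Rightarrow> real^4" where
  "pest_field r K \<alpha> \<phi> c m1 m2 lam a d \<delta> \<gamma> \<sigma> \<eta> u =
     (let X = u$1; S = u$2; I = u$3; A = u$4 in
      vector [ r * X * (1 - X / K) - \<alpha> * X * S / (c + X) - \<phi> * \<alpha> * X * I / (c + X),
               m1 * \<alpha> * X * S / (c + X) - lam * A * S / (a + A) - d * S,
               m2 * \<phi> * \<alpha> * X * I / (c + X) + lam * A * S / (a + A) - (d + \<delta>) * I,
               \<gamma> + \<sigma> * (S + I) - \<eta> * A ])"

end

(*
  At E1 the Jacobian of the field is block triangular, with diagonal entries -r, -eta and the
  per-capita growth rates s = m1 alpha K/(c+K) - lam gamma/(a eta + gamma) - d of S and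
  i = m2 phi alpha K/(c+K) - (d + delta) of I.

  If s < 0 and i < 0, a diagonal quadratic form in u - E1, with weights on S and I large enough
  to absorb the off-diagonal couplings, is a strict Lyapunov function of the linearisation.  Since
  the field differs from its linearisation by o(|u - E1|), the form decays exponentially along
  solutions near E1, which gives stability and attractivity.

  If s > 0, the S-coordinate of a solution starting on the S-axis near E1 grows exponentially as
  long as the solution stays near E1, so it must leave; if i > 0, the same happens to I on the
  I-axis, where S stays 0.  The solutions needed for this are obtained by Picard iteration for the
  field truncated outside a ball, which is globally Lipschitz.
*)
theory Submission
  imports Defs
begin

section \<open>Differential inequalities\<close>

lemma first_crossing_time:
  fixes f :: "real \<Rightarrow> real"
  assumes cont: "continuous_on {0..T} f" and f0: "f 0 < e" and t: "t \<in> {0..T}" "e \<le> f t"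
  obtains t1 where "t1 \<in> {0..T}" "f t1 = e" "\<forall>s\<in>{0..t1}. f s \<le> e"
proof -
  define A where "A = {0..T} \<inter> f -` {e..}"
  have "closed A" unfolding A_def by (intro continuous_closed_preimage cont) auto
  moreover have "bounded A" unfolding A_def by (rule bounded_subset[of "{0..T}"]) auto
  ultimately have "compact A" using compact_eq_bounded_closed by blast
  moreover have "A \<noteq> {}" using t by (auto simp: A_def)
  ultimately obtain t1 where t1: "t1 \<in> A" "\<forall>s\<in>A. t1 \<le> s" using compact_attains_inf by blast
  have t1T: "t1 \<in> {0..T}" "e \<le> f t1" using t1 by (auto simp: A_def)
  have below: "f s < e" if "s \<in> {0..T}" "s < t1" for s
    using t1(2) that by (auto simp: A_def not_le[symmetric])
  have "\<exists>s\<ge>0. s \<le> t1 \<and> f s = e"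
    by (rule IVT') (use f0 t1T in \<open>auto intro: continuous_on_subset[OF cont]\<close>)
  then obtain s where s: "0 \<le> s" "s \<le> t1" "f s = e" by blast
  then have "f t1 = e" using below[of s] t1T by fastforce
  moreover have "\<forall>s\<in>{0..t1}. f s \<le> e"
    using below calculation t1T by (force simp: le_less)
  ultimately show thesis using that t1T by blast
qed

lemma derivative_ge_imp_exp_lower_bound:
  fixes w :: "real \<Rightarrow> real"
  assumes deriv: "\<And>t. t \<in> {0..T} \<Longrightarrow> (w has_real_derivative w' t) (at t within {0..T})"
    and ge: "\<And>t. t \<in> {0..T} \<Longrightarrow> k * w t \<le> w' t" and t: "t \<in> {0..T}"
  shows "w 0 * exp (k * t) \<le> w t"
proof -
  define p where "p s = w s * exp (- k * s)" for s
  have p_deriv: "(p has_real_derivative (w' s - k * w s) * exp (- k * s)) (at s within {0..T})"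
    if "s \<in> {0..T}" for s
    unfolding p_def using deriv[OF that] by (auto intro!: derivative_eq_intros simp: algebra_simps)
  have "continuous_on {0..T} p"
    unfolding continuous_on_eq_continuous_within using p_deriv DERIV_continuous by blast
  then have "continuous_on {0..t} p" by (rule continuous_on_subset) (use t in auto)
  then have "p 0 \<le> p t"
  proof (rule DERIV_nonneg_imp_increasing_open[of 0 t p, rotated 2])
    fix s assume s: "0 < s" "s < t"
    then have "at s within {0..T} = at s" using t by (intro at_within_Icc_at) auto
    then have "(p has_real_derivative (w' s - k * w s) * exp (- k * s)) (at s)"
      using p_deriv[of s] s t by simp
    moreover have "(w' s - k * w s) * exp (- k * s) \<ge> 0" using ge[of s] s t by simp
    ultimately show "\<exists>y. (p has_real_derivative y) (at s) \<and> 0 \<le> y" by blast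
  qed (use t in simp)
  then have "w 0 * exp (k * t) \<le> w t * exp (- k * t) * exp (k * t)" by (simp add: p_def)
  also have "\<dots> = w t" by (simp add: mult.assoc flip: exp_add)
  finally show ?thesis .
qed

lemma derivative_le_imp_exp_upper_bound:
  fixes w :: "real \<Rightarrow> real"
  assumes "\<And>t. t \<in> {0..T} \<Longrightarrow> (w has_real_derivative w' t) (at t within {0..T})"
    and "\<And>t. t \<in> {0..T} \<Longrightarrow> w' t \<le> k * w t" and "t \<in> {0..T}"
  shows "w t \<le> w 0 * exp (k * t)"
proof -
  have "- w 0 * exp (k * t) \<le> - w t"
    by (rule derivative_ge_imp_exp_lower_bound[where w' = "\<lambda>t. - w' t" and T = T])
      (use assms in \<open>auto intro: DERIV_minus\<close>)
  then show ?thesis by simp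
qed

lemma linear_ode_square_lower_bound:
  fixes w g :: "real \<Rightarrow> real"
  assumes w: "\<And>t. t \<in> {0..T} \<Longrightarrow> (w has_real_derivative g t * w t) (at t within {0..T})"
    and g: "\<And>t. t \<in> {0..T} \<Longrightarrow> k \<le> g t" and t: "t \<in> {0..T}"
  shows "(w 0)\<^sup>2 * exp (2 * k * t) \<le> (w t)\<^sup>2"
proof (rule derivative_ge_imp_exp_lower_bound[OF _ _ t])
  fix s assume s: "s \<in> {0..T}"
  show "((\<lambda>t. (w t)\<^sup>2) has_real_derivative 2 * g s * (w s)\<^sup>2) (at s within {0..T})"
    using w[OF s] by (auto intro!: derivative_eq_intros simp: power2_eq_square)
  show "2 * k * (w s)\<^sup>2 \<le> 2 * g s * (w s)\<^sup>2" using g[OF s] by (simp add: mult_right_mono)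
qed

lemma linear_ode_square_upper_bound:
  fixes w g :: "real \<Rightarrow> real"
  assumes w: "\<And>t. t \<in> {0..T} \<Longrightarrow> (w has_real_derivative g t * w t) (at t within {0..T})"
    and g: "\<And>t. t \<in> {0..T} \<Longrightarrow> g t \<le> k" and t: "t \<in> {0..T}"
  shows "(w t)\<^sup>2 \<le> (w 0)\<^sup>2 * exp (2 * k * t)"
proof (rule derivative_le_imp_exp_upper_bound[OF _ _ t])
  fix s assume s: "s \<in> {0..T}"
  show "((\<lambda>t. (w t)\<^sup>2) has_real_derivative 2 * g s * (w s)\<^sup>2) (at s within {0..T})"
    using w[OF s] by (auto intro!: derivative_eq_intros simp: power2_eq_square)
  show "2 * g s * (w s)\<^sup>2 \<le> 2 * k * (w s)\<^sup>2" using g[OF s] by (simp add: mult_right_mono)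
qed

lemma linear_ode_escape:
  fixes w g :: "real \<Rightarrow> real"
  assumes w: "\<And>t. t \<in> {0..T} \<Longrightarrow> (w has_real_derivative g t * w t) (at t within {0..T})"
    and g: "\<And>t. t \<in> {0..T} \<Longrightarrow> k \<le> g t" and k: "k > 0" and w0: "w 0 \<noteq> 0"
    and T: "T = e\<^sup>2 / (2 * k * (w 0)\<^sup>2)"
  shows "e\<^sup>2 < (w T)\<^sup>2"
proof -
  have T0: "T \<ge> 0" using k by (simp add: T)
  have "e\<^sup>2 < (w 0)\<^sup>2 * (1 + 2 * k * T)" using k w0 by (simp add: T field_simps)
  also have "\<dots> \<le> (w 0)\<^sup>2 * exp (2 * k * T)"
    by (intro mult_left_mono) (auto simp: exp_ge_add_one_self)
  also have "\<dots> \<le> (w T)\<^sup>2" using T0 by (intro linear_ode_square_lower_bound[OF w g]) auto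
  finally show ?thesis .
qed

lemma exp_neg_tendsto_0:
  fixes k :: real
  assumes "k > 0"
  shows "((\<lambda>t. exp (- k * t)) \<longlongrightarrow> 0) at_top"
proof -
  have "filterlim (\<lambda>t. exp (k * t)) at_top at_top"
    using filterlim_compose[OF exp_at_top
        filterlim_tendsto_pos_mult_at_top[OF tendsto_const assms filterlim_ident]] .
  then show ?thesis using tendsto_inverse_0_at_top by (simp add: exp_minus)
qed

lemma has_derivative_comp_vector_derivative:
  assumes x: "(x has_vector_derivative v) (at t within S)" and V: "(V has_derivative DV) (at (x t))"
  shows "((\<lambda>s. V (x s)) has_real_derivative DV v) (at t within S)"
proof -
  have "((V \<circ> x) has_derivative DV \<circ> (\<lambda>h. h *\<^sub>R v)) (at t within S)"
    using diff_chain_within[OF x[unfolded has_vector_derivative_def]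
        has_derivative_at_withinI[OF V]] .
  moreover have "DV (h *\<^sub>R v) = DV v * h" for h
    using linear.scaleR[OF has_derivative_linear[OF V]] by simp
  ultimately show ?thesis by (simp add: has_field_derivative_def o_def)
qed

lemma has_derivative_vec_nth [derivative_intros]:
  assumes "(f has_derivative f') F"
  shows "((\<lambda>x. f x $ i) has_derivative (\<lambda>h. f' h $ i)) F"
  using bounded_linear.has_derivative[OF bounded_linear_vec_nth assms] .

lemma has_derivative_vec_componentwise:
  fixes f :: "'a::real_normed_vector \<Rightarrow> real^'n"
  assumes "\<And>i. ((\<lambda>x. f x $ i) has_derivative (\<lambda>h. f' h $ i)) (at a within S)"
  shows "(f has_derivative f') (at a within S)"
proof (subst has_derivative_componentwise_within, intro ballI)
  fix b :: "real^'n" assume "b \<in> Basis"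
  then obtain i where b: "b = axis i 1" using axis_inverse by blast
  show "((\<lambda>x. f x \<bullet> b) has_derivative (\<lambda>x. f' x \<bullet> b)) (at a within S)"
    unfolding b inner_axis inner_real_def mult_1_right by (rule assms)
qed

section \<open>Solutions of autonomous equations\<close>

lemma is_solution_on_subinterval:
  assumes "is_solution_on F x T" "T' \<le> T"
  shows "is_solution_on F x T'"
  using assms unfolding is_solution_on_def
  by (meson atLeastAtMost_iff atLeastatMost_subset_iff has_vector_derivative_within_subset
      order.trans order.refl)

lemma is_solution_on_continuous:
  assumes "is_solution_on F x T"
  shows "continuous_on {0..T} x"
  using assms unfolding is_solution_on_def continuous_on_eq_continuous_within
  using has_vector_derivative_continuous by blast

lemma is_solution_on_transform:
  assumes "is_solution_on G x T" "\<And>t. t \<in> {0..T} \<Longrightarrow> G (x t) = F (x t)"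
  shows "is_solution_on F x T"
  using assms by (simp add: is_solution_on_def)

lemma is_solution_on_component:
  fixes x :: "real \<Rightarrow> real^'n"
  assumes "is_solution_on F x T" "t \<in> {0..T}"
  shows "((\<lambda>t. x t $ j) has_real_derivative F (x t) $ j) (at t within {0..T})"
proof -
  have "(x has_vector_derivative F (x t)) (at t within {0..T})"
    using assms by (simp add: is_solution_on_def)
  from bounded_linear.has_vector_derivative[OF bounded_linear_vec_nth this] show ?thesis
    by (simp add: has_real_derivative_iff_has_vector_derivative)
qed

text \<open>The Picard operator acts on bounded continuous functions on all of \<open>\<real>\<close> (times are clamped
  to \<open>[0, h]\<close>) and is a contraction because \<open>h L < 1\<close>.\<close>
lemma lipschitz_local_solution_exists:
  fixes G :: "'a::euclidean_space \<Rightarrow> 'a"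
  assumes lip: "L-lipschitz_on UNIV G" and h: "h > 0" "h * L < 1"
  shows "\<exists>x. x 0 = q \<and> is_solution_on G x h"
proof -
  have L0: "L \<ge> 0" using lipschitz_on_nonneg[OF lip] .
  have contG: "continuous_on UNIV G" using lipschitz_on_continuous_on[OF lip] .
  define clamp where "clamp t = max 0 (min h t)" for t :: real
  have clamp_in: "clamp t \<in> {0..h}" for t using h by (auto simp: clamp_def)
  have clamp_id: "t \<in> {0..h} \<Longrightarrow> clamp t = t" for t by (auto simp: clamp_def)
  have cont_clamp: "continuous_on UNIV clamp" unfolding clamp_def by (intro continuous_intros)
  have contGx: "continuous_on S (\<lambda>s. G (apply_bcontfun x s))" for x :: "real \<Rightarrow>\<^sub>C 'a" and S
    by (rule continuous_on_compose2[OF contG]) auto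
  have intGx: "(\<lambda>s. G (apply_bcontfun x s)) integrable_on {0..u}" for x :: "real \<Rightarrow>\<^sub>C 'a" and u
    by (rule integrable_continuous_real[OF contGx])
  define g where "g x t = q + integral {0..clamp t} (\<lambda>s. G (apply_bcontfun x s))" for x t
  have g_bcontfun: "g x \<in> bcontfun" for x
  proof -
    define k where "k u = q + integral {0..u} (\<lambda>s. G (apply_bcontfun x s))" for u
    have cont_k: "continuous_on {0..h} k" unfolding k_def
      by (intro continuous_intros indefinite_integral_continuous_1 intGx)
    have g_eq: "g x = k \<circ> clamp" by (auto simp: g_def k_def fun_eq_iff)
    have "continuous_on UNIV (k \<circ> clamp)"
      by (rule continuous_on_compose[OF cont_clamp continuous_on_subset[OF cont_k]])
         (use clamp_in in auto)
    moreover have "range (k \<circ> clamp) \<subseteq> k ` {0..h}" using clamp_in by auto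
    moreover have "bounded (k ` {0..h})"
      by (rule compact_imp_bounded[OF compact_continuous_image[OF cont_k]]) auto
    ultimately show ?thesis unfolding g_eq bcontfun_def using bounded_subset by blast
  qed
  define P where "P x = Bcontfun (g x)" for x
  have apply_P: "apply_bcontfun (P x) = g x" for x
    unfolding P_def using g_bcontfun Bcontfun_inverse by blast
  have contraction: "dist (P x) (P y) \<le> (h * L) * dist x y" for x y
  proof (rule dist_bound)
    fix t
    have "dist (P x t) (P y t)
        = norm (integral {0..clamp t} (\<lambda>s. G (apply_bcontfun x s) - G (apply_bcontfun y s)))"
      by (simp add: apply_P g_def dist_norm integral_diff intGx)
    also have "\<dots> \<le> integral {0..clamp t} (\<lambda>s. L * dist x y)"
    proof (rule integral_norm_bound_integral)
      fix s
      have "norm (G (x s) - G (y s)) \<le> L * dist (x s) (y s)"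
        using lipschitz_onD[OF lip] by (simp add: dist_norm)
      also have "\<dots> \<le> L * dist x y" using dist_bounded L0 by (rule mult_left_mono)
      finally show "norm (G (x s) - G (y s)) \<le> L * dist x y" .
    qed (auto intro: integrable_diff intGx)
    also have "\<dots> = clamp t * (L * dist x y)" using clamp_in[of t] by simp
    also have "\<dots> \<le> h * (L * dist x y)" using clamp_in[of t] L0 by (intro mult_right_mono) auto
    finally show "dist (P x t) (P y t) \<le> h * L * dist x y" by simp
  qed
  obtain x where fixpoint: "P x = x"
    using banach_fix_type[of "h * L" P] contraction h L0 by auto
  have x_eq: "x t = q + integral {0..t} (\<lambda>s. G (x s))" if "t \<in> {0..h}" for t
  proof -
    have "x t = g x t" using arg_cong[OF fixpoint, of apply_bcontfun] by (simp add: apply_P)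
    then show ?thesis using clamp_id[OF that] by (simp add: g_def)
  qed
  show ?thesis
  proof (intro exI conjI)
    show "x 0 = q" using x_eq[of 0] h by simp
    show "is_solution_on G x h" unfolding is_solution_on_def
    proof
      fix t assume t: "t \<in> {0..h}"
      have "((\<lambda>u. q + integral {0..u} (\<lambda>s. G (x s))) has_vector_derivative G (x t))
          (at t within {0..h})"
        using integral_has_vector_derivative[OF contGx t] by (intro derivative_eq_intros) auto
      then show "(x has_vector_derivative G (x t)) (at t within {0..h})"
        by (rule has_vector_derivative_transform[OF t x_eq, rotated])
    qed
  qed
qed

lemma is_solution_on_append:
  assumes x: "is_solution_on G x a" and y: "is_solution_on G y h"
    and y0: "y 0 = x a" and a: "a \<ge> 0" and h: "h \<ge> 0"
  shows "is_solution_on G (\<lambda>t. if t \<in> {0..a} then x t else y (t - a)) (a + h)"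
  unfolding is_solution_on_def
proof
  fix t assume t: "t \<in> {0..a + h}"
  have closures: "closure {0..a} \<inter> closure {a..a + h} = {a}"
    "insert a {0..a} = {0..a}" "insert a {a..a + h} = {a..a + h}" using a h by auto
  have shifted: "((\<lambda>s. y (s - a)) has_vector_derivative G (y (t - a))) (at t within {a..a + h})"
    if "t \<in> {a..a + h}"
  proof -
    have "(y has_vector_derivative G (y (t - a))) (at (t - a) within (\<lambda>s. s - a) ` {a..a + h})"
      using y that by (simp add: is_solution_on_def)
    moreover have "((\<lambda>s. s - a) has_vector_derivative 1) (at t within {a..a + h})"
      by (auto intro!: derivative_eq_intros)
    ultimately show ?thesis
      using vector_diff_chain_within[of "\<lambda>s. s - a" 1 t "{a..a + h}" y] by (simp add: o_def)
  qed
  have "((\<lambda>t. if t \<in> {0..a} then x t else y (t - a)) has_vector_derivative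
      (if t \<in> {0..a} then G (x t) else G (y (t - a)))) (at t within {0..a + h})"
    by (rule has_vector_derivative_If_within_closures[where S = "{0..a}" and T = "{a..a + h}"])
      (use t x a h y0 shifted in \<open>auto simp: closures is_solution_on_def\<close>)
  then show "((\<lambda>t. if t \<in> {0..a} then x t else y (t - a)) has_vector_derivative
      G (if t \<in> {0..a} then x t else y (t - a))) (at t within {0..a + h})"
    by (simp add: if_distrib)
qed

lemma lipschitz_solution_exists:
  fixes G :: "'a::euclidean_space \<Rightarrow> 'a"
  assumes lip: "L-lipschitz_on UNIV G" and T: "T \<ge> 0"
  shows "\<exists>x. x 0 = q \<and> is_solution_on G x T"
proof -
  have L0: "L \<ge> 0" using lipschitz_on_nonneg[OF lip] .
  define h where "h = 1 / (2 * (L + 1))"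
  have h: "h > 0" "h * L < 1" using L0 by (simp_all add: h_def field_simps)
  have steps: "\<exists>x. x 0 = q \<and> is_solution_on G x (real n * h)" for n
  proof (induction n)
    case 0
    have "at (0::real) within {0} = bot" by (simp add: at_within_eq_bot_iff)
    then have "is_solution_on G (\<lambda>_. q) 0"
      by (simp add: is_solution_on_def has_vector_derivative_def has_derivative_def
          bounded_linear_scaleR_left)
    then show ?case by (intro exI[of _ "\<lambda>_. q"]) simp
  next
    case (Suc n)
    then obtain x where "x 0 = q" "is_solution_on G x (real n * h)" by blast
    moreover obtain y where "y 0 = x (real n * h)" "is_solution_on G y h"
      using lipschitz_local_solution_exists[OF lip h] by blast
    ultimately show ?case
      using is_solution_on_append[of G x "real n * h" y h] h
      by (intro exI[of _ "\<lambda>t. if t \<in> {0..real n * h} then x t else y (t - real n * h)"])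
         (auto simp: algebra_simps)
  qed
  obtain n where "T / h \<le> real n" using real_arch_simple by blast
  then have "T \<le> real n * h" using h by (simp add: field_simps)
  then show ?thesis using steps[of n] is_solution_on_subinterval by blast
qed

lemma lipschitz_extension_from_cball:
  fixes F :: "'a::euclidean_space \<Rightarrow> 'b::real_normed_vector"
  assumes lip: "L-lipschitz_on (cball E R) F" and R: "R \<ge> 0"
  obtains G where "L-lipschitz_on UNIV G" "\<And>u. u \<in> cball E R \<Longrightarrow> G u = F u"
proof
  have ball: "convex (cball E R)" "closed (cball E R)" "cball E R \<noteq> {}" using R by auto
  have "1-lipschitz_on UNIV (closest_point (cball E R))"
    by (rule lipschitz_onI) (simp_all add: closest_point_lipschitz[OF ball])
  moreover have "closest_point (cball E R) ` UNIV \<subseteq> cball E R"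
    using closest_point_in_set[OF ball(2,3)] by blast
  ultimately have "(L * 1)-lipschitz_on UNIV (F \<circ> closest_point (cball E R))"
    using lipschitz_on_compose lipschitz_on_subset[OF lip] by blast
  then show "L-lipschitz_on UNIV (F \<circ> closest_point (cball E R))" by simp
  show "(F \<circ> closest_point (cball E R)) u = F u" if "u \<in> cball E R" for u
    using that by (simp add: closest_point_self)
qed

lemma lyapunov_stable_imp_trapped_solutions:
  fixes F :: "'a::euclidean_space \<Rightarrow> 'a"
  assumes stable: "lyapunov_stable F E" and lip: "L-lipschitz_on (cball E R) F"
    and e: "0 < e" "e \<le> R"
  obtains \<delta> where "\<delta> > 0"
    "\<And>p T. dist p E < \<delta> \<Longrightarrow> T \<ge> 0 \<Longrightarrow>
       \<exists>x. x 0 = p \<and> is_solution_on F x T \<and> (\<forall>t\<in>{0..T}. dist (x t) E < e)"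
proof -
  obtain \<delta> where \<delta>: "\<delta> > 0" and trapped: "\<And>x T. T \<ge> 0 \<Longrightarrow> is_solution_on F x T \<Longrightarrow>
      dist (x 0) E < \<delta> \<Longrightarrow> \<forall>t\<in>{0..T}. dist (x t) E < e"
    using stable e unfolding lyapunov_stable_def by meson
  have "R \<ge> 0" using e by simp
  then obtain G where G_lip: "L-lipschitz_on UNIV G" and G: "\<And>u. u \<in> cball E R \<Longrightarrow> G u = F u"
    using lipschitz_extension_from_cball[OF lip] by blast
  \<comment> \<open>Solutions of \<open>G\<close> exist for all times and solve \<open>F\<close> as long as they stay in the ball;
    stability keeps them there.\<close>
  have solves_F: "is_solution_on F x T'"
    if "is_solution_on G x T'" "\<forall>t\<in>{0..T'}. dist (x t) E \<le> e" for x T'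
  proof (rule is_solution_on_transform[OF that(1)])
    fix t assume "t \<in> {0..T'}"
    then have "dist (x t) E \<le> e" using that(2) by blast
    then have "x t \<in> cball E R" using e by (simp add: dist_commute)
    then show "G (x t) = F (x t)" by (rule G)
  qed
  show thesis
  proof (rule that[of "min \<delta> e"])
    show "min \<delta> e > 0" using \<delta> e by auto
    fix p and T :: real assume p: "dist p E < min \<delta> e" and T: "T \<ge> 0"
    obtain x where x0: "x 0 = p" and sol: "is_solution_on G x T"
      using lipschitz_solution_exists[OF G_lip T] by blast
    have inside: "\<forall>t\<in>{0..T}. dist (x t) E < e"
    proof (rule ccontr)
      assume "\<not> (\<forall>t\<in>{0..T}. dist (x t) E < e)"
      then obtain t where "t \<in> {0..T}" "dist (x t) E \<ge> e" by auto
      moreover have "continuous_on {0..T} (\<lambda>t. dist (x t) E)"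
        by (intro continuous_intros is_solution_on_continuous[OF sol])
      ultimately obtain t1 where t1: "t1 \<in> {0..T}" "dist (x t1) E = e"
          "\<forall>s\<in>{0..t1}. dist (x s) E \<le> e"
        using first_crossing_time[of T "\<lambda>t. dist (x t) E" e] p x0 by auto
      have "is_solution_on F x t1"
        using t1 by (intro solves_F is_solution_on_subinterval[OF sol]) auto
      then show False using trapped[of t1 x] t1 p x0 by auto
    qed
    then have "is_solution_on F x T" using sol by (intro solves_F) auto
    then show "\<exists>x. x 0 = p \<and> is_solution_on F x T \<and> (\<forall>t\<in>{0..T}. dist (x t) E < e)"
      using x0 inside by blast
  qed
qed

section \<open>Lyapunov's method and instability\<close>

lemma lyapunov_exp_decay_along_solution:
  assumes deriv: "\<And>u. (V has_derivative DV u) (at u)"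
    and decay: "\<And>u. dist u E \<le> \<rho> \<Longrightarrow> DV u (F u) \<le> - k * V u"
    and sol: "is_solution_on F x T" and near: "\<forall>s\<in>{0..T}. dist (x s) E \<le> \<rho>" and t: "t \<in> {0..T}"
  shows "V (x t) \<le> V (x 0) * exp (- k * t)"
proof (rule derivative_le_imp_exp_upper_bound[OF _ _ t])
  fix s assume s: "s \<in> {0..T}"
  show "((\<lambda>s. V (x s)) has_real_derivative DV (x s) (F (x s))) (at s within {0..T})"
    using has_derivative_comp_vector_derivative[OF _ deriv] sol s by (simp add: is_solution_on_def)
  show "DV (x s) (F (x s)) \<le> - k * V (x s)" using near s decay by blast
qed

text \<open>With \<open>M \<delta>\<^sup>2 = m e\<^sup>2\<close>, a solution starting within \<open>\<delta>\<close> cannot reach the sphere of radius \<open>e\<close>,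
  since \<open>V\<close> does not increase before it does.\<close>
lemma lyapunov_traps_solutions:
  assumes m: "0 < m" "m \<le> M"
    and lower: "\<And>u. m * (dist u E)\<^sup>2 \<le> V u" and upper: "\<And>u. V u \<le> M * (dist u E)\<^sup>2"
    and deriv: "\<And>u. (V has_derivative DV u) (at u)"
    and k: "k \<ge> 0" and decay: "\<And>u. dist u E \<le> \<rho> \<Longrightarrow> DV u (F u) \<le> - k * V u"
    and e: "0 < e" "e \<le> \<rho>" and sol: "is_solution_on F x T"
    and start: "dist (x 0) E < e * sqrt (m / M)"
  shows "\<forall>t\<in>{0..T}. dist (x t) E < e"
proof (rule ccontr)
  assume "\<not> (\<forall>t\<in>{0..T}. dist (x t) E < e)"
  then obtain t where t: "t \<in> {0..T}" "e \<le> dist (x t) E" by auto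
  have "sqrt (m / M) \<le> 1" using m by simp
  then have start_e: "dist (x 0) E < e" using start e by (smt (verit) mult_left_le)
  have cont: "continuous_on {0..T} (\<lambda>t. dist (x t) E)"
    by (intro continuous_intros is_solution_on_continuous[OF sol])
  obtain t1 where t1: "t1 \<in> {0..T}" "dist (x t1) E = e" "\<forall>s\<in>{0..t1}. dist (x s) E \<le> e"
    using first_crossing_time[OF cont start_e t] .
  have "m * e\<^sup>2 \<le> V (x t1)" using lower[of "x t1"] t1 by simp
  also have "\<dots> \<le> V (x 0) * exp (- k * t1)"
    by (rule lyapunov_exp_decay_along_solution[where V = V and F = F and \<rho> = \<rho>])
      (use deriv decay is_solution_on_subinterval[OF sol] t1 e in auto)
  also have "\<dots> \<le> V (x 0)"
    using lower[of "x 0"] m k t1 by (intro mult_left_le) (auto intro: order_trans[rotated])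
  also have "\<dots> \<le> M * (dist (x 0) E)\<^sup>2" by (rule upper)
  also have "\<dots> < M * (e * sqrt (m / M))\<^sup>2"
    using start m by (intro mult_strict_left_mono power_strict_mono) auto
  also have "\<dots> = m * e\<^sup>2" using m by (simp add: power_mult_distrib)
  finally show False by simp
qed

lemma tendsto_of_dist_squared_exp_bound:
  assumes k: "k > 0" and bound: "\<And>t. t \<ge> 0 \<Longrightarrow> (dist (x t) E)\<^sup>2 \<le> C * exp (- k * t)"
  shows "(x \<longlongrightarrow> E) at_top"
proof -
  have "\<forall>\<^sub>F t in at_top. norm ((dist (x t) E)\<^sup>2) \<le> C * exp (- k * t)"
    unfolding eventually_at_top_linorder using bound by (intro exI[of _ 0]) simp
  then have "((\<lambda>t. (dist (x t) E)\<^sup>2) \<longlongrightarrow> 0) at_top"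
    by (rule Lim_null_comparison[OF _ tendsto_mult_right_zero[OF exp_neg_tendsto_0[OF k]]])
  then have "((\<lambda>t. sqrt ((dist (x t) E)\<^sup>2)) \<longlongrightarrow> sqrt 0) at_top"
    by (rule tendsto_real_sqrt)
  then show ?thesis by (subst tendsto_dist_iff) simp
qed

lemma lyapunov_decay_imp_locally_asymptotically_stable:
  fixes F :: "'a::real_normed_vector \<Rightarrow> 'a" and V :: "'a \<Rightarrow> real"
  assumes m: "0 < m" "m \<le> M"
    and lower: "\<And>u. m * (dist u E)\<^sup>2 \<le> V u" and upper: "\<And>u. V u \<le> M * (dist u E)\<^sup>2"
    and deriv: "\<And>u. (V has_derivative DV u) (at u)"
    and \<rho>: "\<rho> > 0" and k: "k > 0" and decay: "\<And>u. dist u E \<le> \<rho> \<Longrightarrow> DV u (F u) \<le> - k * V u"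
  shows "locally_asymptotically_stable F E"
proof -
  have trapped: "\<forall>t\<in>{0..T}. dist (x t) E < e"
    if "0 < e" "e \<le> \<rho>" "is_solution_on F x T" "dist (x 0) E < e * sqrt (m / M)" for e x T
    by (rule lyapunov_traps_solutions[where V = V and DV = DV and F = F and k = k and \<rho> = \<rho>])
      (use m lower upper deriv k decay that in auto)
  have "lyapunov_stable F E"
    unfolding lyapunov_stable_def
  proof (intro allI impI)
    fix \<epsilon> :: real assume "\<epsilon> > 0"
    then have e: "0 < min \<epsilon> \<rho>" "min \<epsilon> \<rho> \<le> \<rho>" using \<rho> by auto
    then show "\<exists>\<delta>>0. \<forall>x T. 0 \<le> T \<and> is_solution_on F x T \<and> dist (x 0) E < \<delta>
        \<longrightarrow> (\<forall>t\<in>{0..T}. dist (x t) E < \<epsilon>)"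
      using trapped[OF e] m by (intro exI[of _ "min \<epsilon> \<rho> * sqrt (m / M)"]) fastforce
  qed
  moreover have "locally_attracting F E"
    unfolding locally_attracting_def
  proof (intro exI[of _ "\<rho> * sqrt (m / M)"] conjI allI impI)
    show "\<rho> * sqrt (m / M) > 0" using \<rho> m by simp
    fix x assume x: "(\<forall>T\<ge>0. is_solution_on F x T) \<and> dist (x 0) E < \<rho> * sqrt (m / M)"
    show "(x \<longlongrightarrow> E) at_top"
    proof (rule tendsto_of_dist_squared_exp_bound[OF k])
      fix t :: real assume t: "t \<ge> 0"
      have sol: "is_solution_on F x t" using x t by blast
      have near: "\<forall>s\<in>{0..t}. dist (x s) E \<le> \<rho>"
        using trapped[OF \<rho> order_refl sol] x by (simp add: less_imp_le)
      have "V (x t) \<le> V (x 0) * exp (- k * t)"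
        by (rule lyapunov_exp_decay_along_solution[where V = V and F = F and \<rho> = \<rho>])
          (use deriv decay sol near t in auto)
      then have "m * (dist (x t) E)\<^sup>2 \<le> V (x 0) * exp (- k * t)"
        using lower[of "x t"] by simp
      then show "(dist (x t) E)\<^sup>2 \<le> V (x 0) / m * exp (- k * t)" using m by (simp add: field_simps)
    qed
  qed
  ultimately show ?thesis by (simp add: locally_asymptotically_stable_def)
qed

lemma linearization_quadratic_decay:
  fixes F :: "'a::real_inner \<Rightarrow> 'a"
  assumes F: "(F has_derivative J) (at E)" "F E = 0" and P: "bounded_linear P"
    and \<kappa>: "\<kappa> > 0" and negative: "\<And>y. P y \<bullet> J y \<le> - \<kappa> * (norm y)\<^sup>2"
  obtains \<rho> where "\<rho> > 0" "\<And>u. dist u E \<le> \<rho> \<Longrightarrow> P (u - E) \<bullet> F u \<le> - (\<kappa> / 2) * (dist u E)\<^sup>2"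
proof -
  obtain B where B: "B > 0" "\<And>y. norm (P y) \<le> B * norm y"
    using bounded_linear.pos_bounded[OF P] by (auto simp: mult.commute)
  obtain d where d: "d > 0"
    and remainder: "\<And>u. norm (u - E) < d \<Longrightarrow> norm (F u - J (u - E)) \<le> \<kappa> / (2 * B) * norm (u - E)"
    using F \<kappa> B unfolding has_derivative_at_alt
    by (metis diff_zero divide_pos_pos mult_pos_pos zero_less_numeral)
  show thesis
  proof (rule that[of "d / 2"])
    show "d / 2 > 0" using d by simp
    fix u assume u: "dist u E \<le> d / 2"
    define y where "y = u - E"
    have y: "norm y = dist u E" "norm y < d" using u d by (auto simp: y_def dist_norm)
    have "P y \<bullet> (F u - J y) \<le> norm (P y) * norm (F u - J y)" by (rule norm_cauchy_schwarz)
    also have "\<dots> \<le> (B * norm y) * (\<kappa> / (2 * B) * norm y)"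
    proof (rule mult_mono)
      show "norm (F u - J y) \<le> \<kappa> / (2 * B) * norm y" using remainder[of u] y by (simp add: y_def)
    qed (use B in auto)
    also have "\<dots> = (\<kappa> / 2) * (norm y)\<^sup>2" using B by (simp add: power2_eq_square field_simps)
    finally have "P y \<bullet> F u \<le> P y \<bullet> J y + (\<kappa> / 2) * (norm y)\<^sup>2" by (simp add: inner_diff_right)
    then show "P (u - E) \<bullet> F u \<le> - (\<kappa> / 2) * (dist u E)\<^sup>2"
      using negative[of y] y by (simp add: y_def)
  qed
qed

theorem quadratic_lyapunov_linearization_imp_locally_asymptotically_stable:
  fixes F :: "'a::real_inner \<Rightarrow> 'a"
  assumes F: "(F has_derivative J) (at E)" "F E = 0"
    and P: "bounded_linear P" "\<And>x y. P x \<bullet> y = x \<bullet> P y"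
    and m: "m > 0" "\<And>y. m * (norm y)\<^sup>2 \<le> P y \<bullet> y"
    and \<kappa>: "\<kappa> > 0" "\<And>y. P y \<bullet> J y \<le> - \<kappa> * (norm y)\<^sup>2"
  shows "locally_asymptotically_stable F E"
proof -
  obtain \<rho> where \<rho>: "\<rho> > 0"
    and decay: "\<And>u. dist u E \<le> \<rho> \<Longrightarrow> P (u - E) \<bullet> F u \<le> - (\<kappa> / 2) * (dist u E)\<^sup>2"
    using linearization_quadratic_decay[OF F P(1) \<kappa>] by blast
  obtain B where B: "B > 0" "\<And>y. norm (P y) \<le> B * norm y"
    using bounded_linear.pos_bounded[OF P(1)] by (auto simp: mult.commute)
  define M where "M = max B m"
  define V where "V u = P (u - E) \<bullet> (u - E)" for u
  have lower: "m * (dist u E)\<^sup>2 \<le> V u" for u using m(2)[of "u - E"] by (simp add: V_def dist_norm)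
  have upper: "V u \<le> M * (dist u E)\<^sup>2" for u
  proof -
    have "V u \<le> norm (P (u - E)) * norm (u - E)" unfolding V_def by (rule norm_cauchy_schwarz)
    also have "\<dots> \<le> (M * norm (u - E)) * norm (u - E)"
    proof (rule mult_right_mono)
      have "B * norm (u - E) \<le> M * norm (u - E)" by (intro mult_right_mono) (auto simp: M_def)
      then show "norm (P (u - E)) \<le> M * norm (u - E)" using B(2)[of "u - E"] by linarith
    qed simp
    finally show ?thesis by (simp add: dist_norm power2_eq_square mult.assoc)
  qed
  have deriv: "(V has_derivative (\<lambda>h. 2 * (P (u - E) \<bullet> h))) (at u)" for u
    unfolding V_def
    by (rule derivative_eq_intros bounded_linear.has_derivative[OF P(1)] refl |
        simp add: P(2) inner_commute)+
  show ?thesis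
  proof (rule lyapunov_decay_imp_locally_asymptotically_stable[OF _ _ lower upper deriv \<rho>])
    show "0 < m" "m \<le> M" "\<kappa> / M > 0" using m \<kappa> B by (auto simp: M_def)
    fix u assume u: "dist u E \<le> \<rho>"
    have "2 * (P (u - E) \<bullet> F u) \<le> - \<kappa> * (dist u E)\<^sup>2" using decay[OF u] by simp
    also have "\<dots> \<le> - (\<kappa> / M) * V u"
      using upper[of u] \<kappa> m by (simp add: M_def field_simps) 
    finally show "2 * (P (u - E) \<bullet> F u) \<le> - (\<kappa> / M) * V u" .
  qed
qed

definition diag_scale :: "real^'n \<Rightarrow> real^'n \<Rightarrow> real^'n" where
  "diag_scale w h = (\<chi> j. w $ j * h $ j)"

lemma bounded_linear_diag_scale: "bounded_linear (diag_scale w)"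
proof -
  have "linear (diag_scale w)" by (auto simp: linear_iff vec_eq_iff diag_scale_def algebra_simps)
  then show ?thesis by (simp add: linear_conv_bounded_linear)
qed

lemma diag_scale_inner_commute: "diag_scale w x \<bullet> y = x \<bullet> diag_scale w y"
  by (simp add: diag_scale_def inner_vec_def mult.assoc mult.left_commute)

lemma diag_scale_inner_lower_bound:
  assumes "\<And>j. m \<le> w $ j"
  shows "m * (norm y)\<^sup>2 \<le> diag_scale w y \<bullet> y"
proof -
  have "m * (norm y)\<^sup>2 = (\<Sum>j\<in>UNIV. m * (y $ j * y $ j))"
    by (simp add: power2_norm_eq_inner inner_vec_def sum_distrib_left)
  also have "\<dots> \<le> (\<Sum>j\<in>UNIV. w $ j * (y $ j * y $ j))"
    using assms by (intro sum_mono mult_right_mono) auto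
  also have "\<dots> = diag_scale w y \<bullet> y" by (simp add: diag_scale_def inner_vec_def mult.assoc)
  finally show ?thesis .
qed

lemma isCont_greater_near:
  fixes g :: "'a::metric_space \<Rightarrow> real"
  assumes "isCont g E" "c < g E"
  obtains r where "r > 0" "\<And>u. dist u E < r \<Longrightarrow> c < g u"
proof -
  obtain r where "r > 0" "\<And>u. u \<noteq> E \<Longrightarrow> dist u E < r \<Longrightarrow> c < g u"
    using order_tendstoD(1)[OF assms(1)[unfolded isCont_def] assms(2)]
    unfolding eventually_at by blast
  with assms(2) show thesis using that by (metis)
qed

text \<open>The \<open>j\<close>-th coordinate of a solution starting on the \<open>j\<close>-th axis grows exponentially while the
  solution stays near \<open>E\<close>, so it leaves a fixed ball however close to \<open>E\<close> it starts.\<close>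
lemma coordinate_growth_imp_not_lyapunov_stable:
  fixes F :: "real^'n \<Rightarrow> real^'n"
  assumes lip: "L-lipschitz_on (cball E R) F" and R: "R > 0" and Ej: "E $ j = 0"
    and g: "isCont g E" "g E > 0"
    and rate: "\<And>x T q t. is_solution_on F x T \<Longrightarrow> x 0 = E + q *\<^sub>R axis j 1 \<Longrightarrow>
      \<forall>s\<in>{0..T}. dist (x s) E < R \<Longrightarrow> t \<in> {0..T} \<Longrightarrow> F (x t) $ j = g (x t) * x t $ j"
  shows "\<not> lyapunov_stable F E"
proof
  assume stable: "lyapunov_stable F E"
  define k where "k = g E / 2"
  have k: "k > 0" "k < g E" using g by (auto simp: k_def)
  obtain r where r: "r > 0" "\<And>u. dist u E < r \<Longrightarrow> k < g u"
    using isCont_greater_near[OF g(1) k(2)] by blast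
  define e where "e = min r R"
  have e: "0 < e" "e \<le> R" using r R by (auto simp: e_def)
  obtain \<delta> where \<delta>: "\<delta> > 0" and trapped: "\<And>p T. dist p E < \<delta> \<Longrightarrow> T \<ge> 0 \<Longrightarrow>
      \<exists>x. x 0 = p \<and> is_solution_on F x T \<and> (\<forall>t\<in>{0..T}. dist (x t) E < e)"
    using lyapunov_stable_imp_trapped_solutions[OF stable lip e] by blast
  define q where "q = \<delta> / 2"
  define T where "T = e\<^sup>2 / (2 * k * q\<^sup>2)"
  have q: "q > 0" "dist (E + q *\<^sub>R axis j 1) E < \<delta>" using \<delta> by (simp_all add: q_def dist_norm)
  have T: "T \<ge> 0" using k q by (simp add: T_def)
  then obtain x where x0: "x 0 = E + q *\<^sub>R axis j 1" and sol: "is_solution_on F x T"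
    and inside: "\<forall>t\<in>{0..T}. dist (x t) E < e"
    using trapped[OF q(2)] by blast
  have escape: "e\<^sup>2 < (x T $ j)\<^sup>2"
  proof (rule linear_ode_escape[where w = "\<lambda>t. x t $ j" and g = "\<lambda>t. g (x t)" and T = T and k = k])
    fix t assume t: "t \<in> {0..T}"
    have "\<forall>s\<in>{0..T}. dist (x s) E < R" using inside e by force
    then show "((\<lambda>t. x t $ j) has_real_derivative g (x t) * x t $ j) (at t within {0..T})"
      using is_solution_on_component[OF sol t, of j] rate[OF sol x0 _ t] by simp
    show "k \<le> g (x t)" using r(2) inside t e by (force simp: e_def)
  qed (use k q in \<open>simp_all add: x0 Ej T_def\<close>)
  have "\<bar>x T $ j\<bar> \<le> dist (x T) E"
    using component_le_norm_cart[of "x T - E" j] by (simp add: Ej dist_norm)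
  also have "\<dots> < e" using inside T by simp
  finally have "(x T $ j)\<^sup>2 < e\<^sup>2" using power_strict_mono[of "\<bar>x T $ j\<bar>" e 2] by simp
  with escape show False by simp
qed

section \<open>Bounded Lipschitz functions\<close>

definition bounded_lipschitz_on :: "'a::metric_space set \<Rightarrow> ('a \<Rightarrow> real) \<Rightarrow> bool" where
  "bounded_lipschitz_on U f \<longleftrightarrow> (\<exists>L. L-lipschitz_on U f) \<and> (\<exists>B. \<forall>u\<in>U. \<bar>f u\<bar> \<le> B)"

lemma bounded_lipschitz_on_const: "bounded_lipschitz_on U (\<lambda>u. k)"
  unfolding bounded_lipschitz_on_def by (auto intro: lipschitz_on_constant)

lemma bounded_lipschitz_on_nth:
  fixes U :: "(real^'n) set"
  assumes "bounded U"
  shows "bounded_lipschitz_on U (\<lambda>u. u $ i)"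
proof -
  obtain B where "\<forall>u\<in>U. norm u \<le> B" using assms bounded_iff by blast
  then have "\<forall>u\<in>U. \<bar>u $ i\<bar> \<le> B" using component_le_norm_cart order_trans by blast
  moreover have "1-lipschitz_on U (\<lambda>u. u $ i)"
    by (rule lipschitz_onI) (auto simp: dist_vec_nth_le)
  ultimately show ?thesis unfolding bounded_lipschitz_on_def by blast
qed

lemma bounded_lipschitz_on_add:
  assumes "bounded_lipschitz_on U f" "bounded_lipschitz_on U g"
  shows "bounded_lipschitz_on U (\<lambda>u. f u + g u)"
proof -
  obtain L1 L2 B1 B2 where "L1-lipschitz_on U f" "L2-lipschitz_on U g"
    "\<forall>u\<in>U. \<bar>f u\<bar> \<le> B1" "\<forall>u\<in>U. \<bar>g u\<bar> \<le> B2"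
    using assms unfolding bounded_lipschitz_on_def by blast
  then have "(L1 + L2)-lipschitz_on U (\<lambda>u. f u + g u)" "\<forall>u\<in>U. \<bar>f u + g u\<bar> \<le> B1 + B2"
    by (auto intro: lipschitz_on_add abs_triangle_ineq[THEN order_trans] add_mono)
  then show ?thesis unfolding bounded_lipschitz_on_def by blast
qed

lemma bounded_lipschitz_on_minus:
  "bounded_lipschitz_on U f \<Longrightarrow> bounded_lipschitz_on U (\<lambda>u. - f u)"
  unfolding bounded_lipschitz_on_def by (auto intro: lipschitz_on_minus)

lemma bounded_lipschitz_on_diff:
  "bounded_lipschitz_on U f \<Longrightarrow> bounded_lipschitz_on U g \<Longrightarrow> bounded_lipschitz_on U (\<lambda>u. f u - g u)"
  using bounded_lipschitz_on_add[OF _ bounded_lipschitz_on_minus, of U f g] by simp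

lemma bounded_lipschitz_on_mult:
  assumes "bounded_lipschitz_on U f" "bounded_lipschitz_on U g"
  shows "bounded_lipschitz_on U (\<lambda>u. f u * g u)"
proof -
  obtain L1 L2 B1 B2 where L: "L1-lipschitz_on U f" "L2-lipschitz_on U g"
    and B: "\<forall>u\<in>U. \<bar>f u\<bar> \<le> B1" "\<forall>u\<in>U. \<bar>g u\<bar> \<le> B2"
    using assms unfolding bounded_lipschitz_on_def by blast
  have "(\<bar>B1\<bar> * L2 + \<bar>B2\<bar> * L1)-lipschitz_on U (\<lambda>u. f u * g u)"
  proof (rule lipschitz_onI)
    fix u v assume uv: "u \<in> U" "v \<in> U"
    have "dist (f u * g u) (f v * g v) = \<bar>f u * (g u - g v) + g v * (f u - f v)\<bar>"
      by (simp add: dist_real_def algebra_simps)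
    also have "\<dots> \<le> \<bar>f u\<bar> * \<bar>g u - g v\<bar> + \<bar>g v\<bar> * \<bar>f u - f v\<bar>"
      by (metis abs_mult abs_triangle_ineq)
    also have "\<dots> \<le> \<bar>B1\<bar> * (L2 * dist u v) + \<bar>B2\<bar> * (L1 * dist u v)"
      using B uv lipschitz_onD[OF L(1) uv] lipschitz_onD[OF L(2) uv]
      by (intro add_mono mult_mono) (auto simp: dist_real_def)
    finally show "dist (f u * g u) (f v * g v) \<le> (\<bar>B1\<bar> * L2 + \<bar>B2\<bar> * L1) * dist u v"
      by (simp add: algebra_simps)
  qed (use lipschitz_on_nonneg[OF L(1)] lipschitz_on_nonneg[OF L(2)] in simp)
  moreover have "\<forall>u\<in>U. \<bar>f u * g u\<bar> \<le> B1 * B2"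
    using B by (auto simp: abs_mult intro!: mult_mono order_trans[OF abs_ge_zero])
  ultimately show ?thesis unfolding bounded_lipschitz_on_def by blast
qed

lemma bounded_lipschitz_on_inverse:
  assumes "bounded_lipschitz_on U g" "m > 0" "\<And>u. u \<in> U \<Longrightarrow> m \<le> g u"
  shows "bounded_lipschitz_on U (\<lambda>u. 1 / g u)"
proof -
  obtain L where L: "L-lipschitz_on U g" using assms unfolding bounded_lipschitz_on_def by blast
  have "(L / m\<^sup>2)-lipschitz_on U (\<lambda>u. 1 / g u)"
  proof (rule lipschitz_onI)
    fix u v assume uv: "u \<in> U" "v \<in> U"
    then have g: "m \<le> g u" "m \<le> g v" using assms by auto
    have "dist (1 / g u) (1 / g v) = \<bar>g v - g u\<bar> / (g u * g v)"
      using g assms(2) by (simp add: dist_real_def field_simps abs_div)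
    also have "\<dots> \<le> (L * dist u v) / (m * m)"
      using g assms(2) lipschitz_onD[OF L uv]
      by (intro frac_le mult_mono) (auto simp: dist_real_def abs_minus_commute)
    finally show "dist (1 / g u) (1 / g v) \<le> L / m\<^sup>2 * dist u v" by (simp add: power2_eq_square)
  qed (use lipschitz_on_nonneg[OF L] in simp)
  moreover have "\<forall>u\<in>U. \<bar>1 / g u\<bar> \<le> 1 / m"
  proof
    fix u assume "u \<in> U"
    then have "m \<le> g u" "0 < g u" using assms(2,3) by force+
    then show "\<bar>1 / g u\<bar> \<le> 1 / m" using assms(2) by (simp add: frac_le)
  qed
  ultimately show ?thesis unfolding bounded_lipschitz_on_def by blast
qed

lemma bounded_lipschitz_on_divide:
  assumes "bounded_lipschitz_on U f" "bounded_lipschitz_on U g" "m > 0" "\<And>u. u \<in> U \<Longrightarrow> m \<le> g u"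
  shows "bounded_lipschitz_on U (\<lambda>u. f u / g u)"
  using bounded_lipschitz_on_mult[OF assms(1) bounded_lipschitz_on_inverse[OF assms(2-4)]] by simp

lemmas bounded_lipschitz_on_intros =
  bounded_lipschitz_on_const bounded_lipschitz_on_nth bounded_lipschitz_on_add
  bounded_lipschitz_on_diff bounded_lipschitz_on_mult

lemma lipschitz_on_vec_componentwise:
  fixes F :: "'a::metric_space \<Rightarrow> real^'n"
  assumes L: "\<And>i. (L i)-lipschitz_on U (\<lambda>u. F u $ i)"
  shows "(\<Sum>i\<in>UNIV. L i)-lipschitz_on U F"
proof (rule lipschitz_onI)
  fix u v assume uv: "u \<in> U" "v \<in> U"
  have "dist (F u) (F v) \<le> (\<Sum>i\<in>UNIV. \<bar>(F u - F v) $ i\<bar>)"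
    unfolding dist_norm by (rule norm_le_l1_cart)
  also have "\<dots> \<le> (\<Sum>i\<in>UNIV. L i * dist u v)"
    using lipschitz_onD[OF L uv] by (intro sum_mono) (auto simp: dist_real_def)
  finally show "dist (F u) (F v) \<le> (\<Sum>i\<in>UNIV. L i) * dist u v" by (simp add: sum_distrib_right)
qed (use L lipschitz_on_nonneg in \<open>blast intro: sum_nonneg\<close>)

section \<open>The pest model\<close>

lemma vector_4_nth [simp]:
  "(vector [x, y, z, w] :: 'a::zero^4) $ 1 = x" "(vector [x, y, z, w] :: 'a^4) $ 2 = y"
  "(vector [x, y, z, w] :: 'a^4) $ 3 = z" "(vector [x, y, z, w] :: 'a^4) $ 4 = w"
  unfolding vector_def by simp_all

lemma inner_vec_4: "x \<bullet> y = x$1 * y$1 + x$2 * y$2 + x$3 * y$3 + x$4 * y$4" for x y :: "real^4"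
  by (simp add: inner_vec_def sum_4)

lemma norm_vec_4_squared: "(norm y)\<^sup>2 = (y$1)\<^sup>2 + (y$2)\<^sup>2 + (y$3)\<^sup>2 + (y$4)\<^sup>2" for y :: "real^4"
  unfolding power2_norm_eq_inner inner_vec_4 by (simp add: power2_eq_square)

lemma pest_field_nth:
  "pest_field r K \<alpha> \<phi> c m1 m2 lam a d \<delta> \<gamma> \<sigma> \<eta> u $ 1
     = r * u$1 * (1 - u$1 / K) - \<alpha> * u$1 * u$2 / (c + u$1) - \<phi> * \<alpha> * u$1 * u$3 / (c + u$1)"
  "pest_field r K \<alpha> \<phi> c m1 m2 lam a d \<delta> \<gamma> \<sigma> \<eta> u $ 2
     = m1 * \<alpha> * u$1 * u$2 / (c + u$1) - lam * u$4 * u$2 / (a + u$4) - d * u$2"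
  "pest_field r K \<alpha> \<phi> c m1 m2 lam a d \<delta> \<gamma> \<sigma> \<eta> u $ 3
     = m2 * \<phi> * \<alpha> * u$1 * u$3 / (c + u$1) + lam * u$4 * u$2 / (a + u$4) - (d + \<delta>) * u$3"
  "pest_field r K \<alpha> \<phi> c m1 m2 lam a d \<delta> \<gamma> \<sigma> \<eta> u $ 4 = \<gamma> + \<sigma> * (u$2 + u$3) - \<eta> * u$4"
  by (simp_all add: pest_field_def Let_def)

lemma pest_field_lipschitz_on:
  assumes "bounded U" "\<And>u. u \<in> U \<Longrightarrow> u$1 \<ge> 0 \<and> u$4 \<ge> 0" "c > 0" "a > 0"
  obtains L where "L-lipschitz_on U (pest_field r K \<alpha> \<phi> c m1 m2 lam a d \<delta> \<gamma> \<sigma> \<eta>)"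
proof -
  have div_c: "bounded_lipschitz_on U (\<lambda>u. f u / (c + u$1))" if "bounded_lipschitz_on U f" for f
    using assms
    by (intro bounded_lipschitz_on_divide[OF that _ \<open>c > 0\<close>] bounded_lipschitz_on_intros) auto
  have div_a: "bounded_lipschitz_on U (\<lambda>u. f u / (a + u$4))" if "bounded_lipschitz_on U f" for f
    using assms
    by (intro bounded_lipschitz_on_divide[OF that _ \<open>a > 0\<close>] bounded_lipschitz_on_intros) auto
  have div_K: "bounded_lipschitz_on U (\<lambda>u. f u / K)" if "bounded_lipschitz_on U f" for f
    using bounded_lipschitz_on_mult[OF that bounded_lipschitz_on_const[of U "1 / K"]] by simp
  have "bounded_lipschitz_on U (\<lambda>u. pest_field r K \<alpha> \<phi> c m1 m2 lam a d \<delta> \<gamma> \<sigma> \<eta> u $ i)" for i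
    using exhaust_4[of i]
    by (elim disjE)
      (simp_all only: pest_field_nth, (intro bounded_lipschitz_on_intros div_c div_a div_K assms)+)
  then obtain L
    where "\<And>i. (L i)-lipschitz_on U (\<lambda>u. pest_field r K \<alpha> \<phi> c m1 m2 lam a d \<delta> \<gamma> \<sigma> \<eta> u $ i)"
    unfolding bounded_lipschitz_on_def by metis
  then show thesis by (rule that[OF lipschitz_on_vec_componentwise])
qed

text \<open>Here \<open>q\<close> and \<open>p\<close> are the values of \<open>X / (c + X)\<close> and \<open>A / (a + A)\<close> at \<open>E1\<close>.\<close>
definition pest_jacobian ::
  "real \<Rightarrow> real \<Rightarrow> real \<Rightarrow> real \<Rightarrow> real \<Rightarrow> real \<Rightarrow> real \<Rightarrow> real \<Rightarrow> real \<Rightarrow> real \<Rightarrow> real \<Rightarrow> real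
   \<Rightarrow> real \<Rightarrow> real \<Rightarrow> real^4 \<Rightarrow> real^4" where
  "pest_jacobian r K \<alpha> \<phi> c m1 m2 lam a d \<delta> \<gamma> \<sigma> \<eta> h =
     (let q = K / (c + K); p = \<gamma> / (a * \<eta> + \<gamma>) in
      vector [ - r * h$1 - \<alpha> * q * h$2 - \<phi> * \<alpha> * q * h$3,
               (m1 * \<alpha> * q - lam * p - d) * h$2,
               lam * p * h$2 + (m2 * \<phi> * \<alpha> * q - (d + \<delta>)) * h$3,
               \<sigma> * h$2 + \<sigma> * h$3 - \<eta> * h$4 ])"

lemma pest_field_has_derivative_at_E1:
  assumes "K > 0" "c > 0" "a > 0" "\<gamma> > 0" "\<eta> > 0"
  shows "(pest_field r K \<alpha> \<phi> c m1 m2 lam a d \<delta> \<gamma> \<sigma> \<eta> has_derivative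
          pest_jacobian r K \<alpha> \<phi> c m1 m2 lam a d \<delta> \<gamma> \<sigma> \<eta>) (at (vector [K, 0, 0, \<gamma> / \<eta>]))"
proof -
  have nonzero: "\<eta> \<noteq> 0" "K \<noteq> 0" "c + K \<noteq> 0" "a + \<gamma> / \<eta> \<noteq> 0" "a * \<eta> + \<gamma> \<noteq> 0"
    using assms by (simp_all add: add_pos_pos pos_add_strict order.strict_implies_not_eq[symmetric])
  have eta_a: "\<eta> * (a + \<gamma> / \<eta>) = a * \<eta> + \<gamma>" using nonzero by (simp add: field_simps)
  have "\<forall>i. ((\<lambda>u. pest_field r K \<alpha> \<phi> c m1 m2 lam a d \<delta> \<gamma> \<sigma> \<eta> u $ i) has_derivative
      (\<lambda>h. pest_jacobian r K \<alpha> \<phi> c m1 m2 lam a d \<delta> \<gamma> \<sigma> \<eta> h $ i)) (at (vector [K, 0, 0, \<gamma> / \<eta>]))"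
    unfolding forall_4 pest_field_nth
    by (intro conjI; (rule has_derivative_eq_rhs, (rule derivative_eq_intros refl |
        simp add: nonzero eta_a pest_jacobian_def Let_def fun_eq_iff ring_distribs)+))
  then show ?thesis by (intro has_derivative_vec_componentwise) blast
qed

lemma mult_le_weighted_squares:
  fixes p b x y :: real
  assumes "p > 0"
  shows "b * x * y \<le> p / 4 * x\<^sup>2 + b\<^sup>2 / p * y\<^sup>2"
proof -
  have "0 \<le> (p * x - 2 * b * y)\<^sup>2 / (4 * p)" using assms by simp
  also have "\<dots> = p / 4 * x\<^sup>2 + b\<^sup>2 / p * y\<^sup>2 - b * x * y"
    using assms by (simp add: field_simps power2_eq_square)
  finally show ?thesis by simp
qed

text \<open>The off-diagonal couplings are absorbed by AM-GM once the \<open>S\<close> and \<open>I\<close> coordinates carry large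
  enough weights; \<open>W3\<close> is fixed first because \<open>W2\<close> must also absorb the coupling of \<open>S\<close> into \<open>I\<close>.\<close>
lemma triangular_quadratic_form_weights:
  fixes r \<eta> s i b2 b3 l \<sigma> :: real
  assumes r: "r > 0" and \<eta>: "\<eta> > 0" and s: "s < 0" and i: "i < 0"
  obtains W2 W3 where "W2 > 0" "W3 > 0"
    "\<And>y1 y2 y3 y4. y1 * (- r * y1 - b2 * y2 - b3 * y3) + W2 * y2 * (s * y2)
        + W3 * y3 * (l * y2 + i * y3) + y4 * (\<sigma> * y2 + \<sigma> * y3 - \<eta> * y4)
      \<le> - (r / 2) * y1\<^sup>2 - y2\<^sup>2 - y3\<^sup>2 - (\<eta> / 2) * y4\<^sup>2"
proof -
  define W3 where "W3 = 2 * (b3\<^sup>2 / r + \<sigma>\<^sup>2 / \<eta> + 1) / (- i)"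
  define W2 where "W2 = (b2\<^sup>2 / r + \<sigma>\<^sup>2 / \<eta> + W3 * l\<^sup>2 / (2 * (- i)) + 1) / (- s)"
  have "b3\<^sup>2 / r + \<sigma>\<^sup>2 / \<eta> + 1 > 0" using r \<eta> by (intro add_nonneg_pos) auto
  then have W3: "W3 > 0" unfolding W3_def using i by (intro divide_pos_pos) auto
  have "W3 * l\<^sup>2 / (2 * (- i)) \<ge> 0" using W3 i by (intro divide_nonneg_pos) auto
  then have "b2\<^sup>2 / r + \<sigma>\<^sup>2 / \<eta> + W3 * l\<^sup>2 / (2 * (- i)) + 1 > 0" using r \<eta>
    by (intro add_nonneg_pos add_nonneg_nonneg) auto
  then have W2: "W2 > 0" unfolding W2_def using s by (intro divide_pos_pos) auto
  have w3i: "W3 * (- i) = 2 * (b3\<^sup>2 / r + \<sigma>\<^sup>2 / \<eta> + 1)" unfolding W3_def using i by simp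
  have w2s: "W2 * (- s) = b2\<^sup>2 / r + \<sigma>\<^sup>2 / \<eta> + W3 * l\<^sup>2 / (2 * (- i)) + 1"
    unfolding W2_def using s by simp
  have "y1 * (- r * y1 - b2 * y2 - b3 * y3) + W2 * y2 * (s * y2)
        + W3 * y3 * (l * y2 + i * y3) + y4 * (\<sigma> * y2 + \<sigma> * y3 - \<eta> * y4)
      \<le> - (r / 2) * y1\<^sup>2 - y2\<^sup>2 - y3\<^sup>2 - (\<eta> / 2) * y4\<^sup>2" for y1 y2 y3 y4
  proof -
    have "W3 * (l * y3 * y2) \<le> W3 * ((- i) / 2 * y3\<^sup>2 + l\<^sup>2 / (2 * (- i)) * y2\<^sup>2)"
      using mult_le_weighted_squares[of "2 * (- i)" l y3 y2] i W3 by (intro mult_left_mono) auto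
    also have "\<dots> = (W3 * (- i)) / 2 * y3\<^sup>2 + W3 * l\<^sup>2 / (2 * (- i)) * y2\<^sup>2"
      by (simp add: algebra_simps)
    also have "\<dots> = (b3\<^sup>2 / r + \<sigma>\<^sup>2 / \<eta> + 1) * y3\<^sup>2 + W3 * l\<^sup>2 / (2 * (- i)) * y2\<^sup>2"
      by (simp only: w3i) (simp add: algebra_simps)
    finally have coupling: "W3 * (l * y2 * y3)
        \<le> (b3\<^sup>2 / r + \<sigma>\<^sup>2 / \<eta> + 1) * y3\<^sup>2 + W3 * l\<^sup>2 / (2 * (- i)) * y2\<^sup>2"
      by (simp add: mult.commute mult.left_commute)
    have "W3 * (i * y3\<^sup>2) = - (W3 * (- i)) * y3\<^sup>2" by simp
    then have diag3: "W3 * (i * y3\<^sup>2) = - 2 * (b3\<^sup>2 / r + \<sigma>\<^sup>2 / \<eta> + 1) * y3\<^sup>2"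
      by (simp only: w3i)
    have "W2 * y2 * (s * y2) = - (W2 * (- s)) * y2\<^sup>2" by (simp add: power2_eq_square)
    then have diag2:
        "W2 * y2 * (s * y2) = - (b2\<^sup>2 / r + \<sigma>\<^sup>2 / \<eta> + W3 * l\<^sup>2 / (2 * (- i)) + 1) * y2\<^sup>2"
      by (simp only: w2s)
    have "(- b2) * y1 * y2 \<le> r / 4 * y1\<^sup>2 + (- b2)\<^sup>2 / r * y2\<^sup>2"
      "(- b3) * y1 * y3 \<le> r / 4 * y1\<^sup>2 + (- b3)\<^sup>2 / r * y3\<^sup>2"
      "\<sigma> * y4 * y2 \<le> \<eta> / 4 * y4\<^sup>2 + \<sigma>\<^sup>2 / \<eta> * y2\<^sup>2"
      "\<sigma> * y4 * y3 \<le> \<eta> / 4 * y4\<^sup>2 + \<sigma>\<^sup>2 / \<eta> * y3\<^sup>2"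
      by (rule mult_le_weighted_squares[OF r] mult_le_weighted_squares[OF \<eta>])+
    then show ?thesis using coupling diag2 diag3 by (simp add: algebra_simps power2_eq_square)
  qed
  with W2 W3 show thesis by (rule that)
qed

lemma pest_jacobian_negative_definite:
  fixes r K \<alpha> \<phi> c m1 m2 lam a d \<delta> \<gamma> \<sigma> \<eta> :: real
  assumes r: "r > 0" and \<eta>: "\<eta> > 0"
    and S_decays: "m1 * \<alpha> * K / (c + K) < lam * \<gamma> / (a * \<eta> + \<gamma>) + d"
    and I_decays: "m2 * \<phi> * \<alpha> * K / (c + K) < d + \<delta>"
  obtains W2 W3 \<kappa> where "W2 > 0" "W3 > 0" "\<kappa> > 0"
    "\<And>y. diag_scale (vector [1, W2, W3, 1]) y \<bullet> pest_jacobian r K \<alpha> \<phi> c m1 m2 lam a d \<delta> \<gamma> \<sigma> \<eta> y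
        \<le> - \<kappa> * (norm y)\<^sup>2"
proof -
  define q where "q = K / (c + K)"
  define p where "p = \<gamma> / (a * \<eta> + \<gamma>)"
  have s: "m1 * \<alpha> * q - lam * p - d < 0" using S_decays by (simp add: q_def p_def)
  have i: "m2 * \<phi> * \<alpha> * q - (d + \<delta>) < 0" using I_decays by (simp add: q_def)
  obtain W2 W3 where W: "W2 > 0" "W3 > 0" and form: "\<And>y1 y2 y3 y4.
      y1 * (- r * y1 - \<alpha> * q * y2 - \<phi> * \<alpha> * q * y3) + W2 * y2 * ((m1 * \<alpha> * q - lam * p - d) * y2)
        + W3 * y3 * (lam * p * y2 + (m2 * \<phi> * \<alpha> * q - (d + \<delta>)) * y3)
        + y4 * (\<sigma> * y2 + \<sigma> * y3 - \<eta> * y4)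
      \<le> - (r / 2) * y1\<^sup>2 - y2\<^sup>2 - y3\<^sup>2 - (\<eta> / 2) * y4\<^sup>2"
    using triangular_quadratic_form_weights[OF r \<eta> s i] by blast
  define \<kappa> where "\<kappa> = min (r / 2) (min 1 (\<eta> / 2))"
  have "diag_scale (vector [1, W2, W3, 1]) y \<bullet> pest_jacobian r K \<alpha> \<phi> c m1 m2 lam a d \<delta> \<gamma> \<sigma> \<eta> y
      \<le> - \<kappa> * (norm y)\<^sup>2" for y
  proof -
    have "diag_scale (vector [1, W2, W3, 1]) y \<bullet> pest_jacobian r K \<alpha> \<phi> c m1 m2 lam a d \<delta> \<gamma> \<sigma> \<eta> y
        \<le> - (r / 2) * (y$1)\<^sup>2 - (y$2)\<^sup>2 - (y$3)\<^sup>2 - (\<eta> / 2) * (y$4)\<^sup>2"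
      using form[of "y$1" "y$2" "y$3" "y$4"]
      by (simp add: inner_vec_4 diag_scale_def pest_jacobian_def Let_def q_def p_def mult.assoc)
    also have "\<dots> \<le> - (\<kappa> * (y$1)\<^sup>2 + \<kappa> * (y$2)\<^sup>2 + \<kappa> * (y$3)\<^sup>2 + \<kappa> * (y$4)\<^sup>2)"
    proof -
      have "\<kappa> * (y$1)\<^sup>2 \<le> r / 2 * (y$1)\<^sup>2" "\<kappa> * (y$2)\<^sup>2 \<le> 1 * (y$2)\<^sup>2"
        "\<kappa> * (y$3)\<^sup>2 \<le> 1 * (y$3)\<^sup>2" "\<kappa> * (y$4)\<^sup>2 \<le> \<eta> / 2 * (y$4)\<^sup>2"
        by (intro mult_right_mono; simp add: \<kappa>_def)+
      then show ?thesis by simp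
    qed
    also have "\<dots> = - \<kappa> * (norm y)\<^sup>2" by (simp add: norm_vec_4_squared algebra_simps)
    finally show ?thesis .
  qed
  moreover have "\<kappa> > 0" using r \<eta> by (simp add: \<kappa>_def)
  ultimately show thesis using W that by blast
qed

lemma pest_E1_locally_asymptotically_stable:
  fixes r K \<alpha> \<phi> c m1 m2 lam a d \<delta> \<gamma> \<sigma> \<eta> :: real
  assumes pos: "r > 0" "K > 0" "c > 0" "a > 0" "\<gamma> > 0" "\<eta> > 0"
    and S_decays: "m1 * \<alpha> * K / (c + K) < lam * \<gamma> / (a * \<eta> + \<gamma>) + d"
    and I_decays: "m2 * \<phi> * \<alpha> * K / (c + K) < d + \<delta>"
  shows "locally_asymptotically_stable (pest_field r K \<alpha> \<phi> c m1 m2 lam a d \<delta> \<gamma> \<sigma> \<eta>)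
           (vector [K, 0, 0, \<gamma> / \<eta>])"
proof -
  obtain W2 W3 \<kappa> where W: "W2 > 0" "W3 > 0" and \<kappa>: "\<kappa> > 0"
    "\<And>y. diag_scale (vector [1, W2, W3, 1]) y \<bullet> pest_jacobian r K \<alpha> \<phi> c m1 m2 lam a d \<delta> \<gamma> \<sigma> \<eta> y
        \<le> - \<kappa> * (norm y)\<^sup>2"
    using pest_jacobian_negative_definite[OF pos(1,6) S_decays I_decays] by blast
  define P :: "real^4 \<Rightarrow> real^4" where "P = diag_scale (vector [1, W2, W3, 1])"
  show ?thesis
  proof (rule quadratic_lyapunov_linearization_imp_locally_asymptotically_stable)
    show "(pest_field r K \<alpha> \<phi> c m1 m2 lam a d \<delta> \<gamma> \<sigma> \<eta> has_derivative
        pest_jacobian r K \<alpha> \<phi> c m1 m2 lam a d \<delta> \<gamma> \<sigma> \<eta>) (at (vector [K, 0, 0, \<gamma> / \<eta>]))"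
      using pos by (intro pest_field_has_derivative_at_E1) auto
    show "pest_field r K \<alpha> \<phi> c m1 m2 lam a d \<delta> \<gamma> \<sigma> \<eta> (vector [K, 0, 0, \<gamma> / \<eta>]) = 0"
      using pos by (simp add: vec_eq_iff forall_4 pest_field_nth)
    show "bounded_linear P" "P x \<bullet> y = x \<bullet> P y" for x y
      by (simp_all add: P_def bounded_linear_diag_scale diag_scale_inner_commute)
    show "min 1 (min W2 W3) > 0" using W by simp
    show "min 1 (min W2 W3) * (norm y)\<^sup>2 \<le> P y \<bullet> y" for y
      unfolding P_def
    proof (rule diag_scale_inner_lower_bound)
      show "min 1 (min W2 W3) \<le> vector [1, W2, W3, 1] $ j" for j :: 4
        using exhaust_4[of j] by auto
    qed
    show "\<kappa> > 0" "P y \<bullet> pest_jacobian r K \<alpha> \<phi> c m1 m2 lam a d \<delta> \<gamma> \<sigma> \<eta> y \<le> - \<kappa> * (norm y)\<^sup>2"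
      for y using \<kappa> by (simp_all add: P_def)
  qed
qed

lemma nonneg_in_cball_E1:
  fixes u :: "real^4"
  assumes "u \<in> cball (vector [K, 0, 0, \<gamma> / \<eta>]) R" "R \<le> K" "R \<le> \<gamma> / \<eta>"
  shows "u$1 \<ge> 0 \<and> u$4 \<ge> 0"
proof -
  have "\<bar>u $ j - vector [K, 0, 0, \<gamma> / \<eta>] $ j\<bar> \<le> R" for j
    using assms(1) component_le_norm_cart[of "u - vector [K, 0, 0, \<gamma> / \<eta>]" j]
    by (simp add: dist_norm norm_minus_commute)
  from this[of 1] this[of 4] show ?thesis using assms(2,3) by (auto simp: abs_le_iff)
qed

lemma pest_solution_S_stays_zero:
  assumes pos: "\<alpha> > 0" "c > 0" "m1 > 0" "lam > 0" "a > 0" "d > 0"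
    and sol: "is_solution_on (pest_field r K \<alpha> \<phi> c m1 m2 lam a d \<delta> \<gamma> \<sigma> \<eta>) x T"
    and nonneg: "\<And>s. s \<in> {0..T} \<Longrightarrow> x s $ 1 \<ge> 0 \<and> x s $ 4 \<ge> 0"
    and S0: "x 0 $ 2 = 0" and t: "t \<in> {0..T}"
  shows "x t $ 2 = 0"
proof -
  define g where "g u = m1 * \<alpha> * u$1 / (c + u$1) - lam * u$4 / (a + u$4) - d" for u :: "real^4"
  have "(x t $ 2)\<^sup>2 \<le> (x 0 $ 2)\<^sup>2 * exp (2 * (m1 * \<alpha>) * t)"
  proof (rule linear_ode_square_upper_bound[OF _ _ t, where g = "\<lambda>s. g (x s)"])
    fix s assume s: "s \<in> {0..T}"
    show "((\<lambda>t. x t $ 2) has_real_derivative g (x s) * x s $ 2) (at s within {0..T})"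
      using is_solution_on_component[OF sol s, of 2]
      by (simp add: g_def pest_field_nth algebra_simps)
    have "m1 * \<alpha> * x s $ 1 / (c + x s $ 1) \<le> m1 * \<alpha>" "lam * x s $ 4 / (a + x s $ 4) \<ge> 0"
      using nonneg[OF s] pos by (simp_all add: field_simps)
    then show "g (x s) \<le> m1 * \<alpha>" using pos by (simp add: g_def)
  qed
  then show ?thesis by (simp add: S0)
qed

lemma pest_E1_not_lyapunov_stable:
  fixes r K \<alpha> \<phi> c m1 m2 lam a d \<delta> \<gamma> \<sigma> \<eta> :: real
  assumes pos: "K > 0" "\<alpha> > 0" "c > 0" "m1 > 0" "lam > 0" "a > 0" "d > 0" "\<gamma> > 0" "\<eta> > 0"
    and grows: "m1 * \<alpha> * K / (c + K) > lam * \<gamma> / (a * \<eta> + \<gamma>) + d \<or> m2 * \<phi> * \<alpha> * K / (c + K) > d + \<delta>"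
  shows "\<not> lyapunov_stable (pest_field r K \<alpha> \<phi> c m1 m2 lam a d \<delta> \<gamma> \<sigma> \<eta>) (vector [K, 0, 0, \<gamma> / \<eta>])"
proof -
  define F where "F = pest_field r K \<alpha> \<phi> c m1 m2 lam a d \<delta> \<gamma> \<sigma> \<eta>"
  define E :: "real^4" where "E = vector [K, 0, 0, \<gamma> / \<eta>]"
  define R where "R = min K (\<gamma> / \<eta>)"
  have R: "R > 0" using pos by (simp add: R_def)
  have nonneg: "u$1 \<ge> 0 \<and> u$4 \<ge> 0" if "u \<in> cball E R" for u
    using that unfolding E_def by (rule nonneg_in_cball_E1) (simp_all add: R_def)
  obtain L where lip: "L-lipschitz_on (cball E R) F"
    using pest_field_lipschitz_on[OF bounded_cball nonneg pos(3,6)] unfolding F_def by blast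
  define g2 where "g2 u = m1 * \<alpha> * u$1 / (c + u$1) - lam * u$4 / (a + u$4) - d" for u :: "real^4"
  define g3 where "g3 u = m2 * \<phi> * \<alpha> * u$1 / (c + u$1) - (d + \<delta>)" for u :: "real^4"
  have "c + E$1 \<noteq> 0" "a + E$4 \<noteq> 0"
    using pos by (simp_all add: E_def add_pos_pos order.strict_implies_not_eq[symmetric])
  then have cont: "isCont g2 E" "isCont g3 E"
    unfolding g2_def g3_def by (auto intro!: continuous_intros)
  have "lam * (\<gamma> / \<eta>) / (a + \<gamma> / \<eta>) = lam * \<gamma> / (a * \<eta> + \<gamma>)" using pos by (simp add: field_simps)
  then have g_E: "g2 E = m1 * \<alpha> * K / (c + K) - (lam * \<gamma> / (a * \<eta> + \<gamma>) + d)"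
      "g3 E = m2 * \<phi> * \<alpha> * K / (c + K) - (d + \<delta>)"
    by (simp_all add: g2_def g3_def E_def)
  from grows show ?thesis unfolding F_def[symmetric] E_def[symmetric]
  proof
    assume "m1 * \<alpha> * K / (c + K) > lam * \<gamma> / (a * \<eta> + \<gamma>) + d"
    then show "\<not> lyapunov_stable F E"
      using g_E by (intro coordinate_growth_imp_not_lyapunov_stable[OF lip R _ cont(1), of 2])
        (auto simp: E_def F_def g2_def pest_field_nth algebra_simps)
  next
    assume "m2 * \<phi> * \<alpha> * K / (c + K) > d + \<delta>"
    moreover have "F (x t) $ 3 = g3 (x t) * x t $ 3"
      if sol: "is_solution_on F x T" and x0: "x 0 = E + q *\<^sub>R axis 3 1"
        and near: "\<forall>s\<in>{0..T}. dist (x s) E < R" and t: "t \<in> {0..T}" for x T q t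
    proof -
      have "x s $ 1 \<ge> 0 \<and> x s $ 4 \<ge> 0" if "s \<in> {0..T}" for s
        using nonneg near that by (simp add: dist_commute less_imp_le)
      then have "x t $ 2 = 0"
        using pest_solution_S_stays_zero[OF pos(2-7) sol[unfolded F_def] _ _ t] x0
        by (simp add: E_def axis_def)
      then show ?thesis by (simp add: F_def g3_def pest_field_nth algebra_simps)
    qed
    ultimately show "\<not> lyapunov_stable F E"
      using g_E by (intro coordinate_growth_imp_not_lyapunov_stable[OF lip R _ cont(2), of 3])
        (auto simp: E_def)
  qed
qed

theorem theorem3:
  fixes r K \<alpha> \<phi> c m1 m2 lam a d \<delta> \<gamma> \<sigma> \<eta> :: real
  assumes pos: "r > 0" "K > 0" "\<alpha> > 0" "\<phi> > 0" "c > 0" "m1 > 0" "m2 > 0" "lam > 0"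
               "a > 0" "d > 0" "\<delta> > 0" "\<gamma> > 0" "\<sigma> > 0" "\<eta> > 0"
      and "\<phi> < 1" and "m1 > m2"
  defines "F \<equiv> pest_field r K \<alpha> \<phi> c m1 m2 lam a d \<delta> \<gamma> \<sigma> \<eta>"
      and "E1 \<equiv> (vector [K, 0, 0, \<gamma> / \<eta>] :: real^4)"
  shows "(m1 * \<alpha> * K / (c + K) < lam * \<gamma> / (a * \<eta> + \<gamma>) + d \<and> m2 * \<phi> * \<alpha> * K / (c + K) < d + \<delta>
            \<longrightarrow> locally_asymptotically_stable F E1)
       \<and> (m1 * \<alpha> * K / (c + K) > lam * \<gamma> / (a * \<eta> + \<gamma>) + d \<or> m2 * \<phi> * \<alpha> * K / (c + K) > d + \<delta>
            \<longrightarrow> unstable_equilibrium F E1)"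
proof (intro conjI impI)
  assume "m1 * \<alpha> * K / (c + K) < lam * \<gamma> / (a * \<eta> + \<gamma>) + d \<and> m2 * \<phi> * \<alpha> * K / (c + K) < d + \<delta>"
  then show "locally_asymptotically_stable F E1"
    unfolding F_def E1_def using pos by (intro pest_E1_locally_asymptotically_stable) auto
next
  assume "m1 * \<alpha> * K / (c + K) > lam * \<gamma> / (a * \<eta> + \<gamma>) + d \<or> m2 * \<phi> * \<alpha> * K / (c + K) > d + \<delta>"
  then show "unstable_equilibrium F E1"
    unfolding unstable_equilibrium_def F_def E1_def
    using pos by (intro pest_E1_not_lyapunov_stable) auto
qed

end
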